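(* Let $\Phi$ be the Couch–Torrence inversion, given in Schwarzschild-like coordinates by $\Phi(t,r,\omega)=\left(t,\frac{rM}{r-M},\omega\right)$. (i) (Exterior.) $\Phi$ is a diffeomorphism of $\mathrm{Ext}$ onto itself with $\Phi\circ\Phi=\mathrm{id}$. It satisfies $\Phi^*g=\frac{M^2}{(r-M)^2}\,g$, and it is an isometry of the rescaled metric: $\Phi^*\hat g=\hat g$, where $\hat g=r^{-2}g$. Every point of the photon sphere $\{r=2M\}$ is fixed by $\Phi$. In the outgoing chart of the starting point and the ingoing chart of the image point, $\Phi$ reads $(u,R,\omega)\mapsto(v',R',\omega')=\left(u,\frac{1-MR}{M},\omega\right)$. Consequently $\Phi$ extends to the conformal boundary and exchanges the future horizon $\mathscr H^+$ with future null infinity $\mathscr I^+$. Likewise it exchanges the past horizon $\mathscr H^-$ with past null infinity $\mathscr I^-$. (ii) (Interior.) Let $\mathrm{Int}$ be the interior region $0<r<M$, written in outgoing Eddington–Finkelstein coordinates $(u,r,\omega)\in\mathbb R\times(0,M)\times S^2$ with metric $g=F(r)\,du^2+2\,du\,dr-r^2d\omega^2$. Let $\mathcal N=\mathbb R_v\times(-\infty,0)_r\times S^2$ carry the metric $g_{\mathcal N}=F(r)\,dv^2+2\,dv\,dr-r^2d\omega^2$. Define the map $\Phi:\mathrm{Int}\to\mathcal N$ by $(u,r,\omega)\mapsto\left(u+2r_*(r),\frac{rM}{r-M},\omega\right)$. Then: - $\Phi$ is a diffeomorphism onto $\mathcal N$; - $\Phi^*g_{\mathcal N}=\frac{M^2}{(r-M)^2}g$;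 - $\Phi^*(r^{-2}g_{\mathcal N})=r^{-2}g$, where on each side $r$ denotes the respective radial coordinate. Under the change of coordinate $r'=-r\in(0,\infty)$, $g_{\mathcal N}$ becomes $\left(1+\frac{M}{r'}\right)^2dv^2-2\,dv\,dr'-r'^2d\omega^2$. This is the extreme Reissner–Nordström metric with mass $-M$ and charge $\pm M$ in ingoing Eddington–Finkelstein form. Under $\Phi$, the singularity $r\to0^+$ of $\mathrm{Int}$ corresponds to the singularity $r'\to0^+$ of $\mathcal N$, and the horizon $r\to M^-$ corresponds to the infinity $r'\to+\infty$ of $\mathcal N$.
   Context: Fix $M>0$ and let $F(r)=(1-M/r)^2$. The exterior of the extreme Reissner–Nordström black hole is $\mathrm{Ext}=\mathbb R_t\times(M,\infty)_r\times S^2_\omega$ with metric $g=F(r)\,dt^2-F(r)^{-1}dr^2-r^2d\omega^2$, where $d\omega^2$ is the round metric of the unit sphere. The Regge–Wheeler coordinate is $r_*=r-M+2M\log\frac{|r-M|}{M}-\frac{M^2}{r-M}$ (defined for $r\neq M$). On $(M,\infty)$ one has $dr_*/dr=1/F$ and $r_*(2M)=0$. Put $u=t-r_*$, $v=t+r_*$, $R=1/r$. The rescaled metric $\hat g=R^2g$ reads - $\hat g=R^2(1-MR)^2du^2-2\,du\,dR-d\omega^2$ in the outgoing chart $(u,R,\omega)$; - $\hat g=R^2(1-MR)^2dv^2+2\,dv\,dR-d\omega^2$ in the ingoing chart $(v,R,\omega)$. In the outgoing chart, $\hat g$ extends smoothly to $R=0$, defining future null infinity $\mathscr I^+=\{R=0\}$,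 and to $R=1/M$, defining the past horizon $\mathscr H^-$. In the ingoing chart, $\{R=0\}$ is past null infinity $\mathscr I^-$ and $\{R=1/M\}$ is the future horizon $\mathscr H^+$. The time orientation is the one for which $\partial_t$ is future-directed. *)

theory Defs
  imports "HOL-Analysis.Analysis"
begin

text \<open>Points of R x R x R^3; the angular variable omega lives on the unit sphere S2 in R^3.
  Tangent vectors at a point p are triples (a, b, xi) with xi orthogonal to the angular part of p.\<close>

type_synonym pt = "real \<times> real \<times> (real^3)"

definition S2 :: "(real^3) set" where "S2 = sphere 0 1"

definition rad :: "pt \<Rightarrow> real" where "rad p = fst (snd p)"
definition ang :: "pt \<Rightarrow> real^3" where "ang p = snd (snd p)"

definition Tan :: "pt \<Rightarrow> pt set" where
  "Tan p = {X. ang X \<bullet> ang p = 0}"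

primrec Ck :: "nat \<Rightarrow> 'a::real_normed_vector set \<Rightarrow> ('a \<Rightarrow> 'b::real_normed_vector) \<Rightarrow> bool" where
  "Ck 0 S f = continuous_on S f"
| "Ck (Suc n) S f = ((\<forall>x\<in>S. f differentiable (at x)) \<and>
                       (\<forall>v. Ck n S (\<lambda>x. frechet_derivative f (at x) v)))"

definition smooth_on :: "'a::real_normed_vector set \<Rightarrow> ('a \<Rightarrow> 'b::real_normed_vector) \<Rightarrow> bool" where
  "smooth_on U f = (\<forall>n. Ck n U f)"

definition smooth_map_on :: "'a::real_normed_vector set \<Rightarrow> ('a \<Rightarrow> 'b::real_normed_vector) \<Rightarrow> bool" where
  "smooth_map_on S f = (\<exists>U F. open U \<and> S \<subseteq> U \<and> smooth_on U F \<and> (\<forall>x\<in>S. F x = f x))"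

definition diffeo :: "'a::real_normed_vector set \<Rightarrow> 'b::real_normed_vector set \<Rightarrow> ('a \<Rightarrow> 'b) \<Rightarrow> bool" where
  "diffeo S T f = (bij_betw f S T \<and> smooth_map_on S f \<and> smooth_map_on T (inv_into S f))"

text \<open>Metrics: g p X Y is the value of the (0,2)-tensor at p on tangent vectors X, Y.\<close>

type_synonym metric = "pt \<Rightarrow> pt \<Rightarrow> pt \<Rightarrow> real"

definition pullback :: "(pt \<Rightarrow> pt) \<Rightarrow> metric \<Rightarrow> metric" where
  "pullback \<Phi> g p X Y = g (\<Phi> p) (frechet_derivative \<Phi> (at p) X) (frechet_derivative \<Phi> (at p) Y)"

definition metric_eq_on :: "pt set \<Rightarrow> metric \<Rightarrow> metric \<Rightarrow> bool" where
  "metric_eq_on S g h = (\<forall>p\<in>S. \<forall>X\<in>Tan p. \<forall>Y\<in>Tan p. g p X Y = h p X Y)"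

definition rescale :: "metric \<Rightarrow> metric" where
  "rescale g p X Y = g p X Y / (rad p)\<^sup>2"

definition F :: "real \<Rightarrow> real \<Rightarrow> real" where "F M r = (1 - M / r)\<^sup>2"

definition rstar :: "real \<Rightarrow> real \<Rightarrow> real" where
  "rstar M r = r - M + 2 * M * ln (\<bar>r - M\<bar> / M) - M\<^sup>2 / (r - M)"

definition Ext :: "real \<Rightarrow> pt set" where
  "Ext M = {p. M < rad p \<and> ang p \<in> S2}"

definition g_Ext :: "real \<Rightarrow> metric" where
  "g_Ext M p X Y = F M (rad p) * fst X * fst Y - rad X * rad Y / F M (rad p)
                   - (rad p)\<^sup>2 * (ang X \<bullet> ang Y)"

definition Phi_Ext :: "real \<Rightarrow> pt \<Rightarrow> pt" where
  "Phi_Ext M p = (fst p, rad p * M / (rad p - M), ang p)"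

definition to_out :: "real \<Rightarrow> pt \<Rightarrow> pt" where
  "to_out M p = (fst p - rstar M (rad p), 1 / rad p, ang p)"
definition to_in :: "real \<Rightarrow> pt \<Rightarrow> pt" where
  "to_in M p = (fst p + rstar M (rad p), 1 / rad p, ang p)"

definition Cpt :: "real \<Rightarrow> pt set" where
  "Cpt M = {p. 0 \<le> rad p \<and> rad p \<le> 1 / M \<and> ang p \<in> S2}"

definition ghat_out :: "real \<Rightarrow> metric" where
  "ghat_out M p X Y = (rad p)\<^sup>2 * (1 - M * rad p)\<^sup>2 * fst X * fst Y
                      - (fst X * rad Y + rad X * fst Y) - ang X \<bullet> ang Y"
definition ghat_in :: "real \<Rightarrow> metric" where
  "ghat_in M p X Y = (rad p)\<^sup>2 * (1 - M * rad p)\<^sup>2 * fst X * fst Y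
                      + (fst X * rad Y + rad X * fst Y) - ang X \<bullet> ang Y"

text \<open>R = 0: scri^+ in the outgoing chart, scri^- in the ingoing chart.
      R = 1/M: past horizon H^- in the outgoing chart, future horizon H^+ in the ingoing chart.\<close>
definition scri_plus :: "real \<Rightarrow> pt set" where "scri_plus M = {p. rad p = 0 \<and> ang p \<in> S2}"
definition scri_minus :: "real \<Rightarrow> pt set" where "scri_minus M = {p. rad p = 0 \<and> ang p \<in> S2}"
definition hor_minus :: "real \<Rightarrow> pt set" where "hor_minus M = {p. rad p = 1 / M \<and> ang p \<in> S2}"
definition hor_plus :: "real \<Rightarrow> pt set" where "hor_plus M = {p. rad p = 1 / M \<and> ang p \<in> S2}"

definition Phi_hat :: "real \<Rightarrow> pt \<Rightarrow> pt" where
  "Phi_hat M p = (fst p, (1 - M * rad p) / M, ang p)"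

definition IntR :: "real \<Rightarrow> pt set" where
  "IntR M = {p. 0 < rad p \<and> rad p < M \<and> ang p \<in> S2}"
definition NR :: "pt set" where
  "NR = {p. rad p < 0 \<and> ang p \<in> S2}"

definition g_EF :: "real \<Rightarrow> metric" where
  "g_EF M p X Y = F M (rad p) * fst X * fst Y + (fst X * rad Y + rad X * fst Y)
                  - (rad p)\<^sup>2 * (ang X \<bullet> ang Y)"

abbreviation g_Int :: "real \<Rightarrow> metric" where "g_Int M \<equiv> g_EF M"
abbreviation g_N :: "real \<Rightarrow> metric" where "g_N M \<equiv> g_EF M"

definition Phi_Int :: "real \<Rightarrow> pt \<Rightarrow> pt" where
  "Phi_Int M p = (fst p + 2 * rstar M (rad p), rad p * M / (rad p - M), ang p)"

definition flip :: "pt \<Rightarrow> pt" where "flip p = (fst p, - rad p, ang p)"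
definition Npos :: "pt set" where "Npos = {p. 0 < rad p \<and> ang p \<in> S2}"

definition g_Nflip :: "real \<Rightarrow> metric" where
  "g_Nflip M p X Y = (1 + M / rad p)\<^sup>2 * fst X * fst Y - (fst X * rad Y + rad X * fst Y)
                     - (rad p)\<^sup>2 * (ang X \<bullet> ang Y)"

definition g_RN_in :: "real \<Rightarrow> real \<Rightarrow> metric" where
  "g_RN_in m q p X Y = (1 - 2 * m / rad p + q\<^sup>2 / (rad p)\<^sup>2) * fst X * fst Y
                       - (fst X * rad Y + rad X * fst Y) - (rad p)\<^sup>2 * (ang X \<bullet> ang Y)"

end

theory Submission
  imports Defs "HOL-Computational_Algebra.Polynomial"
begin

text \<open>The radial part phi(r) = r M / (r - M) of the inversion satisfies phi(r) - M = M^2 / (r - M).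
  Hence it is an involution of the reals minus M exchanging (M, oo) with itself and (0, M) with
  (-oo, 0), and the tortoise coordinate is odd under it: r_*(phi(r)) = -r_*(r), which turns u into v.
  With k = M^2 / (r - M)^2 one has phi' = -k, F(phi(r)) = k F(r) and phi(r)^2 = k r^2, while
  r_*' = 1 / F; substituted into the metrics, these give the conformal factor k, and dividing by
  phi(r)^2 = k r^2 the isometry of the rescaled metrics.
  Smoothness: every map involved has the form (t, r, w) |-> (t + h1(r), h2(r), w) with h1, h2 of the
  form a r + e ln |r - m| + P(1 / (r - m)) for a polynomial P, a class closed under differentiation.\<close>

lemma Ck_cong_open:
  assumes "open U"
  shows "\<forall>x\<in>U. f x = g x \<Longrightarrow> Ck n U f \<Longrightarrow> Ck n U g"
proof (induction n arbitrary: f g)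
  case 0
  then show ?case using continuous_on_cong by force
next
  case (Suc n)
  have g_diff: "g differentiable (at x)"
    and same_deriv: "frechet_derivative g (at x) = frechet_derivative f (at x)" if "x \<in> U" for x
  proof -
    from Suc.prems that obtain D where D: "(f has_derivative D) (at x)"
      by (auto simp: differentiable_def)
    with Suc.prems(1) have "(g has_derivative D) (at x)"
      using has_derivative_transform_within_open[OF D assms that] by auto
    then show "g differentiable (at x)" "frechet_derivative g (at x) = frechet_derivative f (at x)"
      using D frechet_derivative_at by (metis differentiable_def)+
  qed
  have "Ck n U (\<lambda>x. frechet_derivative g (at x) v)" for v
    using Suc.prems same_deriv
      Suc.IH[of "\<lambda>x. frechet_derivative f (at x) v" "\<lambda>x. frechet_derivative g (at x) v"]
    by auto
  with g_diff show ?case by simp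
qed

lemma smooth_on_derivative_closed_family:
  assumes "open U"
    and differentiable: "\<And>f. P f \<Longrightarrow> \<forall>x\<in>U. f differentiable (at x)"
    and derivative_closed: "\<And>f v. P f \<Longrightarrow> \<exists>g. P g \<and> (\<forall>x\<in>U. frechet_derivative f (at x) v = g x)"
    and "P f"
  shows "smooth_on U f"
proof -
  have "\<forall>f. P f \<longrightarrow> Ck n U f" for n
  proof (induction n)
    case 0
    show ?case
      using differentiable
      by (metis Ck.simps(1) continuous_at_imp_continuous_on differentiable_imp_continuous_within)
  next
    case (Suc n)
    show ?case
    proof (intro allI impI)
      fix f assume "P f"
      have "Ck n U (\<lambda>x. frechet_derivative f (at x) v)" for v
      proof -
        obtain g where "P g" "\<forall>x\<in>U. frechet_derivative f (at x) v = g x"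
          using derivative_closed[OF \<open>P f\<close>] by blast
        then show ?thesis using Suc.IH Ck_cong_open[OF assms(1), of g] by auto
      qed
      with differentiable[OF \<open>P f\<close>] show "Ck (Suc n) U f" by simp
    qed
  qed
  with \<open>P f\<close> show ?thesis by (simp add: smooth_on_def)
qed

lemma bij_betw_involution:
  assumes "\<forall>x\<in>A. f (f x) = x" "\<forall>y\<in>B. f (f y) = y" "f ` A \<subseteq> B" "f ` B \<subseteq> A"
  shows "bij_betw f A B"
  by (rule bij_betw_byWitness[where f'=f]) (use assms in auto)

lemma diffeo_involution:
  assumes "\<forall>x\<in>S. f (f x) = x" "\<forall>y\<in>T. f (f y) = y" "f ` S \<subseteq> T" "f ` T \<subseteq> S"
    and "open U" "S \<union> T \<subseteq> U" "smooth_on U G" "\<forall>x\<in>S \<union> T. G x = f x"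
  shows "diffeo S T f"
proof -
  have bij: "bij_betw f S T" using assms(1-4) by (rule bij_betw_involution)
  have "inv_into S f y = f y" if "y \<in> T" for y
    using bij assms(2,4) that by (metis bij_betw_def image_subset_iff inv_into_f_eq)
  then show ?thesis
    unfolding diffeo_def smooth_map_on_def using assms(5-8) bij by (metis Un_iff le_supE)
qed

lemma DERIV_ln_abs_diff:
  fixes m r :: real
  assumes "r \<noteq> m"
  shows "DERIV (\<lambda>r. ln \<bar>r - m\<bar>) r :> 1 / (r - m)"
proof (cases "r > m")
  case True
  have "DERIV (\<lambda>r. ln (r - m)) r :> 1 / (r - m)"
    using True by (auto intro!: derivative_eq_intros)
  then show ?thesis
    by (rule has_field_derivative_transform_within_open[where S="{m<..}"]) (use True in auto)
next
  case False
  then have "r < m" using assms by auto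
  have "DERIV (\<lambda>r. ln (m - r)) r :> 1 / (r - m)"
    using \<open>r < m\<close> by (auto intro!: derivative_eq_intros simp: field_simps)
  then show ?thesis
    by (rule has_field_derivative_transform_within_open[where S="{..<m}"]) (use \<open>r < m\<close> in auto)
qed

definition log_laurent :: "real \<Rightarrow> real \<Rightarrow> real \<Rightarrow> real poly \<Rightarrow> real \<Rightarrow> real" where
  "log_laurent m a e q r = a * r + e * ln \<bar>r - m\<bar> + poly q (1 / (r - m))"

definition log_laurent_deriv :: "real \<Rightarrow> real \<Rightarrow> real poly \<Rightarrow> real poly" where
  "log_laurent_deriv a e q = [:a, e:] + pderiv q * [:0, 0, -1:]"

lemma DERIV_log_laurent:
  assumes "r \<noteq> m"
  shows "DERIV (log_laurent m a e q) r :> poly (log_laurent_deriv a e q) (1 / (r - m))"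
proof -
  have inv: "DERIV (\<lambda>r. 1 / (r - m)) r :> - (1 / (r - m))\<^sup>2"
    using assms by (auto intro!: derivative_eq_intros simp: field_simps power2_eq_square)
  have "DERIV (log_laurent m a e q) r
      :> a + e * (1 / (r - m)) + poly (pderiv q) (1 / (r - m)) * - (1 / (r - m))\<^sup>2"
    unfolding log_laurent_def
    by (intro DERIV_add DERIV_cmult DERIV_ln_abs_diff DERIV_chain2[OF poly_DERIV inv] assms)
      (auto intro!: derivative_eq_intros)
  then show ?thesis by (simp add: log_laurent_deriv_def power2_eq_square algebra_simps)
qed

definition radial_map ::
    "real \<Rightarrow> (real \<Rightarrow> real) \<Rightarrow> (real \<Rightarrow> real) \<Rightarrow> real^3 \<Rightarrow> real \<Rightarrow> pt \<Rightarrow> pt" where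
  "radial_map a h1 h2 c b q = (a * fst q + h1 (rad q), h2 (rad q), c + b *\<^sub>R ang q)"

lemma has_derivative_radial_map:
  assumes "DERIV h1 (rad p) :> d1" "DERIV h2 (rad p) :> d2"
  shows "(radial_map a h1 h2 c b has_derivative
          (\<lambda>X. (a * fst X + d1 * rad X, d2 * rad X, b *\<^sub>R ang X))) (at p)"
proof -
  have rad: "(rad has_derivative rad) (at p)" and ang: "(ang has_derivative ang) (at p)"
    unfolding rad_def ang_def by (auto intro!: derivative_eq_intros)
  have "((\<lambda>q. h1 (rad q)) has_derivative (\<lambda>X. d1 * rad X)) (at p)"
    and "((\<lambda>q. h2 (rad q)) has_derivative (\<lambda>X. d2 * rad X)) (at p)"
    using has_derivative_compose[OF rad assms(1)[unfolded has_field_derivative_def]]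
      has_derivative_compose[OF rad assms(2)[unfolded has_field_derivative_def]]
    by (simp_all add: mult.commute)
  then show ?thesis
    unfolding radial_map_def
    by (auto intro!: derivative_eq_intros ang)
qed

lemma open_rad_neq: "open {q::pt. rad q \<noteq> m}"
  unfolding rad_def by (intro open_Collect_neq continuous_intros)

lemma smooth_on_radial_map_log_laurent:
  "smooth_on {q. rad q \<noteq> m}
     (radial_map a (log_laurent m a1 e1 q1) (log_laurent m a2 e2 q2) c b)"
proof (rule smooth_on_derivative_closed_family[where
      P="\<lambda>f. \<exists>a a1 e1 q1 a2 e2 q2 c b.
               f = radial_map a (log_laurent m a1 e1 q1) (log_laurent m a2 e2 q2) c b"])
  show "open {q::pt. rad q \<noteq> m}" by (rule open_rad_neq)
next
  fix f assume "\<exists>a a1 e1 q1 a2 e2 q2 c b.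
      f = radial_map a (log_laurent m a1 e1 q1) (log_laurent m a2 e2 q2) c b"
  then show "\<forall>x\<in>{q. rad q \<noteq> m}. f differentiable (at x)"
    using has_derivative_radial_map[OF DERIV_log_laurent DERIV_log_laurent]
    unfolding differentiable_def by blast
next
  fix f v assume "\<exists>a a1 e1 q1 a2 e2 q2 c b.
      f = radial_map a (log_laurent m a1 e1 q1) (log_laurent m a2 e2 q2) c b"
  then obtain a a1 e1 q1 a2 e2 q2 c b
    where f: "f = radial_map a (log_laurent m a1 e1 q1) (log_laurent m a2 e2 q2) c b"
    by blast
  let ?g = "radial_map 0
    (log_laurent m 0 0 (smult (rad v) (log_laurent_deriv a1 e1 q1) + [:a * fst v:]))
    (log_laurent m 0 0 (smult (rad v) (log_laurent_deriv a2 e2 q2))) (b *\<^sub>R ang v) 0"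
  have "frechet_derivative f (at x) v = ?g x" if "rad x \<noteq> m" for x
    using frechet_derivative_at[OF has_derivative_radial_map[OF
          DERIV_log_laurent[OF that] DERIV_log_laurent[OF that]]]
    by (simp add: f radial_map_def log_laurent_def mult.commute)
  then show "\<exists>g. (\<exists>a a1 e1 q1 a2 e2 q2 c b.
                   g = radial_map a (log_laurent m a1 e1 q1) (log_laurent m a2 e2 q2) c b)
              \<and> (\<forall>x\<in>{q. rad q \<noteq> m}. frechet_derivative f (at x) v = g x)"
    by blast
qed blast

lemma frechet_derivative_shear:
  assumes "DERIV h1 (rad p) :> d1" "DERIV h2 (rad p) :> d2"
  shows "frechet_derivative (\<lambda>q. (fst q + h1 (rad q), h2 (rad q), ang q)) (at p)
       = (\<lambda>X. (fst X + d1 * rad X, d2 * rad X, ang X))"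
proof -
  have "radial_map 1 h1 h2 0 1 = (\<lambda>q. (fst q + h1 (rad q), h2 (rad q), ang q))"
    by (simp add: radial_map_def fun_eq_iff)
  then show ?thesis
    using frechet_derivative_at[OF has_derivative_radial_map[OF assms, of 1 0 1]] by simp
qed

lemma pullback_rescale:
  assumes "pullback \<Phi> g p X Y = k * h p X Y" "(rad (\<Phi> p))\<^sup>2 = k * (rad p)\<^sup>2" "k \<noteq> 0"
  shows "pullback \<Phi> (rescale g) p X Y = rescale h p X Y"
proof -
  have "pullback \<Phi> (rescale g) p X Y = pullback \<Phi> g p X Y / (rad (\<Phi> p))\<^sup>2"
    by (simp add: pullback_def rescale_def)
  with assms show ?thesis by (simp add: rescale_def)
qed

lemma rad_Pair [simp]: "rad (a, b, c) = b" and ang_Pair [simp]: "ang (a, b, c) = c"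
  by (simp_all add: rad_def ang_def)


definition ct_radius :: "real \<Rightarrow> real \<Rightarrow> real" where
  "ct_radius M r = r * M / (r - M)"

lemma ct_radius_minus:
  "r \<noteq> M \<Longrightarrow> ct_radius M r - M = M\<^sup>2 / (r - M)"
  by (simp add: ct_radius_def field_simps power2_eq_square)

lemma ct_radius_ct_radius:
  assumes "0 < M" "r \<noteq> M"
  shows "ct_radius M (ct_radius M r) = r"
proof -
  have "ct_radius M (ct_radius M r) = ct_radius M r * M / (M\<^sup>2 / (r - M))"
    using ct_radius_minus[OF assms(2)] by (simp add: ct_radius_def)
  also have "\<dots> = r" using assms by (simp add: ct_radius_def field_simps power2_eq_square)
  finally show ?thesis .
qed

lemma rstar_ct_radius:
  assumes "0 < M" "r \<noteq> M"
  shows "rstar M (ct_radius M r) = - rstar M r"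
proof -
  have "\<bar>ct_radius M r - M\<bar> / M = M / \<bar>r - M\<bar>"
    using assms by (simp add: ct_radius_minus abs_divide power2_eq_square field_simps)
  then have "ln (\<bar>ct_radius M r - M\<bar> / M) = - ln (\<bar>r - M\<bar> / M)"
    using assms by (simp add: ln_div)
  moreover have "M\<^sup>2 / (ct_radius M r - M) = r - M"
    using assms by (simp add: ct_radius_minus)
  ultimately show ?thesis
    unfolding rstar_def using ct_radius_minus[OF assms(2)] by (simp add: algebra_simps)
qed

lemma ct_radius_conformal:
  assumes "0 < M" "r \<noteq> M" "r \<noteq> 0"
  shows "F M (ct_radius M r) = M\<^sup>2 / (r - M)\<^sup>2 * F M r"
    and "(ct_radius M r)\<^sup>2 = M\<^sup>2 / (r - M)\<^sup>2 * r\<^sup>2"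
proof -
  have "r - M \<noteq> 0" using assms by simp
  then show "F M (ct_radius M r) = M\<^sup>2 / (r - M)\<^sup>2 * F M r"
    using assms by (simp add: F_def ct_radius_def divide_simps)
  show "(ct_radius M r)\<^sup>2 = M\<^sup>2 / (r - M)\<^sup>2 * r\<^sup>2"
    by (simp add: ct_radius_def power_divide power_mult_distrib)
qed

lemma DERIV_ct_radius:
  "r \<noteq> M \<Longrightarrow> DERIV (ct_radius M) r :> - (M\<^sup>2 / (r - M)\<^sup>2)"
  unfolding ct_radius_def by (auto intro!: derivative_eq_intros simp: field_simps power2_eq_square)

lemma DERIV_rstar:
  assumes "0 < M" "r \<noteq> M"
  shows "DERIV (rstar M) r :> r\<^sup>2 / (r - M)\<^sup>2"
proof -
  have "DERIV (\<lambda>r. r - M + 2 * M * (ln \<bar>r - M\<bar> - ln M) - M\<^sup>2 / (r - M)) r :>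
      1 + 2 * M * (1 / (r - M) - 0) - - (M\<^sup>2 / (r - M)\<^sup>2)"
    using assms
    by (intro DERIV_diff DERIV_add DERIV_cmult DERIV_ln_abs_diff)
      (auto intro!: derivative_eq_intros simp: field_simps power2_eq_square)
  also have "1 + 2 * M * (1 / (r - M) - 0) - - (M\<^sup>2 / (r - M)\<^sup>2) = r\<^sup>2 / (r - M)\<^sup>2"
    using assms by (simp add: divide_simps) (simp add: power2_eq_square algebra_simps)
  finally show ?thesis
    by (rule has_field_derivative_transform_within_open[where S="{x. x \<noteq> M}"])
      (use assms in \<open>auto simp: rstar_def ln_div open_Collect_neq\<close>)
qed


lemma Phi_Ext_ct_radius: "Phi_Ext M = (\<lambda>p. (fst p, ct_radius M (rad p), ang p))"
  by (simp add: Phi_Ext_def ct_radius_def fun_eq_iff)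

lemma Phi_Ext_mem_Ext:
  assumes "0 < M" "p \<in> Ext M"
  shows "Phi_Ext M p \<in> Ext M"
proof -
  have "0 < ct_radius M (rad p) - M"
    using assms by (simp add: Ext_def ct_radius_minus)
  with assms show ?thesis by (simp add: Ext_def Phi_Ext_ct_radius)
qed

lemma Phi_Ext_Phi_Ext: "0 < M \<Longrightarrow> p \<in> Ext M \<Longrightarrow> Phi_Ext M (Phi_Ext M p) = p"
  by (auto simp: Ext_def Phi_Ext_ct_radius ct_radius_ct_radius rad_def ang_def)

lemma diffeo_Phi_Ext:
  assumes "0 < M"
  shows "diffeo (Ext M) (Ext M) (Phi_Ext M)"
proof (rule diffeo_involution)
  let ?G = "radial_map 1 (log_laurent M 0 0 0) (log_laurent M 0 0 [:M, M\<^sup>2:]) 0 1"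
  show "smooth_on {q. rad q \<noteq> M} ?G" by (rule smooth_on_radial_map_log_laurent)
  have "?G p = Phi_Ext M p" if "rad p \<noteq> M" for p
    using that by (simp add: radial_map_def log_laurent_def Phi_Ext_ct_radius ct_radius_def
        field_simps power2_eq_square)
  then show "\<forall>p\<in>Ext M \<union> Ext M. ?G p = Phi_Ext M p" by (simp add: Ext_def)
qed (use assms Phi_Ext_mem_Ext Phi_Ext_Phi_Ext open_rad_neq in \<open>auto simp: Ext_def\<close>)

lemma frechet_derivative_Phi_Ext:
  "rad p \<noteq> M \<Longrightarrow> frechet_derivative (Phi_Ext M) (at p)
     = (\<lambda>X. (fst X, - (M\<^sup>2 / (rad p - M)\<^sup>2) * rad X, ang X))"
  using frechet_derivative_shear[OF DERIV_const[of 0] DERIV_ct_radius]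
  by (simp add: Phi_Ext_ct_radius)

lemma pullback_Phi_Ext:
  assumes "0 < M" "p \<in> Ext M"
  shows "pullback (Phi_Ext M) (g_Ext M) p X Y = M\<^sup>2 / (rad p - M)\<^sup>2 * g_Ext M p X Y"
proof -
  let ?r = "rad p" and ?k = "M\<^sup>2 / (rad p - M)\<^sup>2"
  have r: "?r \<noteq> M" "?r \<noteq> 0" using assms by (auto simp: Ext_def)
  have "pullback (Phi_Ext M) (g_Ext M) p X Y
      = F M (ct_radius M ?r) * fst X * fst Y - (- ?k * rad X) * (- ?k * rad Y) / F M (ct_radius M ?r)
        - (ct_radius M ?r)\<^sup>2 * (ang X \<bullet> ang Y)"
    unfolding pullback_def frechet_derivative_Phi_Ext[OF r(1)] g_Ext_def
    by (simp add: Phi_Ext_ct_radius)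
  also have "\<dots> = ?k * F M ?r * fst X * fst Y - (- ?k * rad X) * (- ?k * rad Y) / (?k * F M ?r)
        - ?k * ?r\<^sup>2 * (ang X \<bullet> ang Y)"
    by (simp only: ct_radius_conformal[OF assms(1) r])
  also have "\<dots> = ?k * g_Ext M p X Y"
    using r assms by (simp add: g_Ext_def F_def field_simps)
  finally show ?thesis .
qed

lemma pullback_Phi_Ext_rescale:
  assumes "0 < M" "p \<in> Ext M"
  shows "pullback (Phi_Ext M) (rescale (g_Ext M)) p X Y = rescale (g_Ext M) p X Y"
  using assms
  by (intro pullback_rescale[OF pullback_Phi_Ext]) (auto simp: Ext_def Phi_Ext_ct_radius ct_radius_conformal)


lemma Phi_Ext_photon_sphere: "rad p = 2 * M \<Longrightarrow> Phi_Ext M p = p"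
  by (cases p) (simp add: Phi_Ext_def)

lemma inverse_ct_radius:
  "0 < M \<Longrightarrow> r \<noteq> M \<Longrightarrow> r \<noteq> 0 \<Longrightarrow> 1 / ct_radius M r = (1 - M * (1 / r)) / M"
  by (simp add: ct_radius_def field_simps)

lemma to_in_Phi_Ext:
  "0 < M \<Longrightarrow> p \<in> Ext M \<Longrightarrow> to_in M (Phi_Ext M p) = Phi_hat M (to_out M p)"
  by (auto simp: Ext_def to_in_def to_out_def Phi_hat_def Phi_Ext_ct_radius rstar_ct_radius
      inverse_ct_radius)

lemma to_out_Phi_Ext:
  "0 < M \<Longrightarrow> p \<in> Ext M \<Longrightarrow> to_out M (Phi_Ext M p) = Phi_hat M (to_in M p)"
  by (auto simp: Ext_def to_in_def to_out_def Phi_hat_def Phi_Ext_ct_radius rstar_ct_radius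
      inverse_ct_radius)

lemma Phi_hat_Phi_hat: "0 < M \<Longrightarrow> Phi_hat M (Phi_hat M p) = p"
  by (simp add: Phi_hat_def rad_def ang_def field_simps)

lemma diffeo_Phi_hat:
  assumes "0 < M"
  shows "diffeo (Cpt M) (Cpt M) (Phi_hat M)"
proof (rule diffeo_involution)
  \<comment> \<open>The pole of the radial components is irrelevant; it is placed at R = -1, outside Cpt M.\<close>
  let ?G = "radial_map 1 (log_laurent (-1) 0 0 0) (log_laurent (-1) (-1) 0 [:1 / M:]) 0 1"
  show "smooth_on {q. rad q \<noteq> -1} ?G" by (rule smooth_on_radial_map_log_laurent)
  show "\<forall>p\<in>Cpt M \<union> Cpt M. ?G p = Phi_hat M p"
    using assms by (simp add: radial_map_def log_laurent_def Phi_hat_def field_simps)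
qed (use assms Phi_hat_Phi_hat open_rad_neq in \<open>auto simp: Cpt_def Phi_hat_def field_simps\<close>)

lemma frechet_derivative_Phi_hat:
  assumes "0 < M"
  shows "frechet_derivative (Phi_hat M) (at p) = (\<lambda>X. (fst X, - rad X, ang X))"
proof -
  have "DERIV (\<lambda>R. (1 - M * R) / M) (rad p) :> -1"
    using assms by (auto intro!: derivative_eq_intros)
  from frechet_derivative_shear[OF DERIV_const[of 0] this] show ?thesis
    by (simp add: Phi_hat_def[abs_def])
qed

lemma conformal_factor_Phi_hat:
  assumes "0 < M"
  shows "(rad (Phi_hat M p))\<^sup>2 * (1 - M * rad (Phi_hat M p))\<^sup>2 = (rad p)\<^sup>2 * (1 - M * rad p)\<^sup>2"
  using assms by (simp add: Phi_hat_def field_simps power2_eq_square)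

lemma pullback_Phi_hat_ghat_in:
  "0 < M \<Longrightarrow> pullback (Phi_hat M) (ghat_in M) p X Y = ghat_out M p X Y"
  unfolding pullback_def ghat_in_def ghat_out_def frechet_derivative_Phi_hat conformal_factor_Phi_hat
  by simp

lemma pullback_Phi_hat_ghat_out:
  "0 < M \<Longrightarrow> pullback (Phi_hat M) (ghat_out M) p X Y = ghat_in M p X Y"
  unfolding pullback_def ghat_in_def ghat_out_def frechet_derivative_Phi_hat conformal_factor_Phi_hat
  by simp

lemma bij_betw_Phi_hat_boundary:
  assumes "0 < M"
  shows "bij_betw (Phi_hat M) {p. rad p = 0 \<and> ang p \<in> S2} {p. rad p = 1 / M \<and> ang p \<in> S2}"
    and "bij_betw (Phi_hat M) {p. rad p = 1 / M \<and> ang p \<in> S2} {p. rad p = 0 \<and> ang p \<in> S2}"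
  using assms Phi_hat_Phi_hat
  by (auto intro!: bij_betw_involution simp: Phi_hat_def field_simps)


lemma Phi_Int_ct_radius:
  "Phi_Int M = (\<lambda>p. (fst p + 2 * rstar M (rad p), ct_radius M (rad p), ang p))"
  by (simp add: Phi_Int_def ct_radius_def fun_eq_iff)

lemma Phi_Int_mem_NR: "0 < M \<Longrightarrow> p \<in> IntR M \<Longrightarrow> Phi_Int M p \<in> NR"
  by (auto simp: IntR_def NR_def Phi_Int_ct_radius ct_radius_def intro!: divide_pos_neg)

lemma Phi_Int_mem_IntR:
  assumes "0 < M" "p \<in> NR"
  shows "Phi_Int M p \<in> IntR M"
proof -
  have r: "rad p < 0" "ang p \<in> S2" using assms by (auto simp: NR_def)
  have "0 < ct_radius M (rad p)"
    using r assms(1) by (simp add: ct_radius_def divide_neg_neg mult_neg_pos)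
  moreover have "ct_radius M (rad p) - M < 0"
    using r assms(1) by (simp add: ct_radius_minus divide_pos_neg)
  ultimately show ?thesis using r by (simp add: IntR_def Phi_Int_ct_radius)
qed

lemma Phi_Int_Phi_Int: "0 < M \<Longrightarrow> rad p \<noteq> M \<Longrightarrow> Phi_Int M (Phi_Int M p) = p"
  by (simp add: Phi_Int_ct_radius ct_radius_ct_radius rstar_ct_radius rad_def ang_def)

lemma diffeo_Phi_Int:
  assumes "0 < M"
  shows "diffeo (IntR M) NR (Phi_Int M)"
proof (rule diffeo_involution)
  let ?G = "radial_map 1 (log_laurent M 2 (4 * M) [:- 2 * M - 4 * M * ln M, - 2 * M\<^sup>2:])
    (log_laurent M 0 0 [:M, M\<^sup>2:]) 0 1"
  show "smooth_on {q. rad q \<noteq> M} ?G" by (rule smooth_on_radial_map_log_laurent)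
  have "?G p = Phi_Int M p" if "rad p \<noteq> M" for p
    using assms that
    by (simp add: radial_map_def log_laurent_def Phi_Int_ct_radius ct_radius_def rstar_def ln_div
        field_simps power2_eq_square)
  then show "\<forall>p\<in>IntR M \<union> NR. ?G p = Phi_Int M p"
    using assms by (auto simp: IntR_def NR_def)
qed (use assms Phi_Int_mem_NR Phi_Int_mem_IntR Phi_Int_Phi_Int open_rad_neq
      in \<open>auto simp: IntR_def NR_def\<close>)

lemma frechet_derivative_Phi_Int:
  assumes "0 < M" "rad p \<noteq> M"
  shows "frechet_derivative (Phi_Int M) (at p) = (\<lambda>X.
    (fst X + 2 * ((rad p)\<^sup>2 / (rad p - M)\<^sup>2) * rad X, - (M\<^sup>2 / (rad p - M)\<^sup>2) * rad X, ang X))"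
  using frechet_derivative_shear[OF DERIV_cmult[OF DERIV_rstar[OF assms]] DERIV_ct_radius[OF assms(2)]]
  by (simp add: Phi_Int_ct_radius)

lemma pullback_Phi_Int:
  assumes "0 < M" "p \<in> IntR M"
  shows "pullback (Phi_Int M) (g_EF M) p X Y = M\<^sup>2 / (rad p - M)\<^sup>2 * g_EF M p X Y"
proof -
  let ?r = "rad p" and ?k = "M\<^sup>2 / (rad p - M)\<^sup>2"
  have r: "?r \<noteq> M" "?r \<noteq> 0" using assms by (auto simp: IntR_def)
  let ?X0 = "fst X + 2 * (?r\<^sup>2 / (?r - M)\<^sup>2) * rad X" and ?Y0 = "fst Y + 2 * (?r\<^sup>2 / (?r - M)\<^sup>2) * rad Y"
  have "pullback (Phi_Int M) (g_EF M) p X Y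
      = F M (ct_radius M ?r) * ?X0 * ?Y0 + (?X0 * (- ?k * rad Y) + (- ?k * rad X) * ?Y0)
        - (ct_radius M ?r)\<^sup>2 * (ang X \<bullet> ang Y)"
    unfolding pullback_def frechet_derivative_Phi_Int[OF assms(1) r(1)] g_EF_def
    by (simp add: Phi_Int_ct_radius)
  also have "\<dots> = ?k * F M ?r * ?X0 * ?Y0 + (?X0 * (- ?k * rad Y) + (- ?k * rad X) * ?Y0)
        - ?k * ?r\<^sup>2 * (ang X \<bullet> ang Y)"
    by (simp only: ct_radius_conformal[OF assms(1) r])
  also have "\<dots> = ?k * g_EF M p X Y"
    using r assms by (simp add: g_EF_def F_def field_simps)
  finally show ?thesis .
qed

lemma pullback_Phi_Int_rescale:
  assumes "0 < M" "p \<in> IntR M"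
  shows "pullback (Phi_Int M) (rescale (g_EF M)) p X Y = rescale (g_EF M) p X Y"
  using assms
  by (intro pullback_rescale[OF pullback_Phi_Int])
    (auto simp: IntR_def Phi_Int_ct_radius ct_radius_conformal)


lemma diffeo_flip: "diffeo Npos NR flip"
proof (rule diffeo_involution)
  let ?G = "radial_map 1 (log_laurent 0 0 0 0) (log_laurent 0 (-1) 0 0) 0 1"
  show "smooth_on {q. rad q \<noteq> 0} ?G" by (rule smooth_on_radial_map_log_laurent)
  show "\<forall>p\<in>Npos \<union> NR. ?G p = flip p" by (simp add: radial_map_def log_laurent_def flip_def)
qed (use open_rad_neq in \<open>auto simp: Npos_def NR_def flip_def rad_def ang_def\<close>)

lemma pullback_flip: "pullback flip (g_EF M) p X Y = g_Nflip M p X Y"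
proof -
  have "frechet_derivative flip (at p) = (\<lambda>X. (fst X, - rad X, ang X))"
    using frechet_derivative_shear[OF DERIV_const[of 0] DERIV_minus[OF DERIV_ident]]
    by (simp add: flip_def[abs_def])
  then show ?thesis
    unfolding pullback_def g_EF_def g_Nflip_def by (simp add: flip_def F_def algebra_simps)
qed

lemma g_Nflip_eq_g_RN_in:
  assumes "p \<in> Npos" "q\<^sup>2 = M\<^sup>2"
  shows "g_Nflip M p X Y = g_RN_in (- M) q p X Y"
proof -
  have "(1 + M / rad p)\<^sup>2 = 1 - 2 * (- M) / rad p + q\<^sup>2 / (rad p)\<^sup>2"
    using assms by (simp add: Npos_def field_simps power2_eq_square)
  then show ?thesis unfolding g_Nflip_def g_RN_in_def by simp
qed

lemma Phi_Int_radius_limits: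
  assumes "0 < M"
  shows "((\<lambda>r. - rad (Phi_Int M (u, r, \<omega>))) \<longlongrightarrow> 0) (at_right 0)"
    and "filterlim (\<lambda>r. - rad (Phi_Int M (u, r, \<omega>))) at_top (at_left M)"
proof -
  have radius: "(\<lambda>r. - rad (Phi_Int M (u, r, \<omega>))) = (\<lambda>r. r * M / (M - r))"
    by (simp add: Phi_Int_def fun_eq_iff minus_divide_right)
  have "((\<lambda>r. r * M / (M - r)) \<longlongrightarrow> 0 * M / (M - 0)) (at_right 0)"
    using assms by (intro tendsto_intros) auto
  then show "((\<lambda>r. - rad (Phi_Int M (u, r, \<omega>))) \<longlongrightarrow> 0) (at_right 0)"
    by (simp add: radius)
  have "filterlim (\<lambda>r. r * M / (M - r)) at_top (at_left M)"
  proof (rule LIM_at_top_divide)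
    show "((\<lambda>r. r * M) \<longlongrightarrow> M * M) (at_left M)" by (intro tendsto_intros)
    show "0 < M * M" using assms by simp
    have "((\<lambda>r. M - r) \<longlongrightarrow> M - M) (at_left M)" by (intro tendsto_intros)
    then show "((\<lambda>r. M - r) \<longlongrightarrow> 0) (at_left M)" by simp
    show "eventually (\<lambda>r. 0 < M - r) (at_left M)"
      by (simp add: eventually_at_left_field) (use assms in \<open>auto intro: exI[of _ "M - 1"]\<close>)
  qed
  then show "filterlim (\<lambda>r. - rad (Phi_Int M (u, r, \<omega>))) at_top (at_left M)"
    by (simp add: radius)
qed

theorem theorem1:
  fixes M :: real
  assumes "0 < M"
  shows
    \<comment> \<open>(i) exterior\<close>
    "diffeo (Ext M) (Ext M) (Phi_Ext M)
   \<and> (\<forall>p\<in>Ext M. Phi_Ext M (Phi_Ext M p) = p)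
   \<and> metric_eq_on (Ext M) (pullback (Phi_Ext M) (g_Ext M))
                   (\<lambda>p X Y. M\<^sup>2 / (rad p - M)\<^sup>2 * g_Ext M p X Y)
   \<and> metric_eq_on (Ext M) (pullback (Phi_Ext M) (rescale (g_Ext M))) (rescale (g_Ext M))
   \<and> (\<forall>p\<in>Ext M. rad p = 2 * M \<longrightarrow> Phi_Ext M p = p)
   \<and> (\<forall>p\<in>Ext M. to_in M (Phi_Ext M p) = Phi_hat M (to_out M p))
   \<and> (\<forall>p\<in>Ext M. to_out M (Phi_Ext M p) = Phi_hat M (to_in M p))
   \<and> diffeo (Cpt M) (Cpt M) (Phi_hat M)
   \<and> metric_eq_on (Cpt M) (pullback (Phi_hat M) (ghat_in M)) (ghat_out M)
   \<and> metric_eq_on (Cpt M) (pullback (Phi_hat M) (ghat_out M)) (ghat_in M)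
   \<and> bij_betw (Phi_hat M) (scri_plus M) (hor_plus M)
   \<and> bij_betw (Phi_hat M) (hor_plus M) (scri_plus M)
   \<and> bij_betw (Phi_hat M) (hor_minus M) (scri_minus M)
   \<and> bij_betw (Phi_hat M) (scri_minus M) (hor_minus M)
    \<comment> \<open>(ii) interior\<close>
   \<and> diffeo (IntR M) NR (Phi_Int M)
   \<and> metric_eq_on (IntR M) (pullback (Phi_Int M) (g_N M))
                   (\<lambda>p X Y. M\<^sup>2 / (rad p - M)\<^sup>2 * g_Int M p X Y)
   \<and> metric_eq_on (IntR M) (pullback (Phi_Int M) (rescale (g_N M))) (rescale (g_Int M))
   \<and> diffeo Npos NR flip
   \<and> metric_eq_on Npos (pullback flip (g_N M)) (g_Nflip M)
   \<and> metric_eq_on Npos (g_Nflip M) (g_RN_in (- M) M)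
   \<and> metric_eq_on Npos (g_Nflip M) (g_RN_in (- M) (- M))
   \<and> (\<forall>p\<in>IntR M. 0 < - rad (Phi_Int M p))
   \<and> (\<forall>u \<omega>. \<omega> \<in> S2 \<longrightarrow>
        ((\<lambda>r. - rad (Phi_Int M (u, r, \<omega>))) \<longlongrightarrow> 0) (at_right 0)
      \<and> filterlim (\<lambda>r. - rad (Phi_Int M (u, r, \<omega>))) at_top (at_left M))"
  using assms
    diffeo_Phi_Ext Phi_Ext_Phi_Ext pullback_Phi_Ext pullback_Phi_Ext_rescale Phi_Ext_photon_sphere
    to_in_Phi_Ext to_out_Phi_Ext
    diffeo_Phi_hat pullback_Phi_hat_ghat_in pullback_Phi_hat_ghat_out bij_betw_Phi_hat_boundary
    diffeo_Phi_Int pullback_Phi_Int pullback_Phi_Int_rescale Phi_Int_mem_NR Phi_Int_radius_limits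
    diffeo_flip pullback_flip g_Nflip_eq_g_RN_in[of _ M] g_Nflip_eq_g_RN_in[of _ "- M"]
  unfolding metric_eq_on_def scri_plus_def scri_minus_def hor_plus_def hor_minus_def
  by (simp add: NR_def)

end
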